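(* For a veering triangulation $\tau$ of $M$, there is a surjective $\mathbb{Z}[G]$-module homomorphism $\mathcal{E}(\tilde\tau)\to\mathcal{E}^\triangle(\tilde\tau)$ (induced by the identity on the free module on edges of $\tilde\tau$), and consequently $\Theta_\tau$ divides $V_\tau$ in $\mathbb{Z}[G]$.
   Context: $\tau$ is a veering triangulation of $M$ (taut ideal triangulation with cooriented faces, each tetrahedron having two bottom and two top faces, a bottom edge, a top edge and four side edges, angle sum $2\pi$ around edges, with a consistent right/left veer on edges modelled on a thickened rhombus whose side edges of positive slope are right-veering and of negative slope left-veering). $E$, $F$ denote the sets of edges and faces of $\tau$. $G=H_1(M;\mathbb{Z})/\mathrm{torsion}$, $\hat M$ the corresponding (universal free abelian) cover with deck group $G$, $\tilde\tau$ the lifted triangulation. Tetrahedron relation of a tetrahedron with bottom edge $\mathbf b$, top edge $\mathbf t$: $\mathbf b=\mathbf t+\mathbf s_1+\mathbf s_2$ where $\mathbf s_1,\mathbf s_2$ are the side edges of veer opposite to $\mathbf t$. Face relation of a face $f$: $\mathbf b=\mathbf x+\mathbf y$ where $\mathbf b$ is the bottom edge of the unique tetrahedron having $f$ as a bottom face and $\mathbf x,\mathbf y$ are the other edges of $f$. The edge module $\mathcal{E}(\tilde\tau)$ is the free $\mathbb{Z}$-module on edges of $\tilde\tau$ modulo the tetrahedron relations of all tetrahedra of $\tilde\tau$; choosing lifts of edges it is the cokernel of $L:\mathbb{Z}[G]^E\to\mathbb{Z}[G]^E$ sending each edge $\mathbf b$ to $\mathbf b-(\mathbf t+\mathbf s_1+\mathbf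 s_2)$ for the tetrahedron above it, and the veering polynomial is $V_\tau=\det L\in\mathbb{Z}[G]$. The face module $\mathcal{E}^\triangle(\tilde\tau)$ is the free module on edges of $\tilde\tau$ modulo all face relations, i.e. the cokernel of $L^\triangle:\mathbb{Z}[G]^F\to\mathbb{Z}[G]^E$, $f\mapsto \mathbf b-(\mathbf x+\mathbf y)$; the taut polynomial $\Theta_\tau$ is the gcd of the $|E|\times|E|$ minors of $L^\triangle$, defined up to a unit $\pm g$. *)

theory Defs
  imports "HOL-Analysis.Analysis" "HOL-Library.Poly_Mapping"
begin

text \<open>Vertices are 0,1,2,3; a local edge is a
  two-element subset of the vertices; a local face is indexed by its opposite vertex.
  The taut labelling is fixed: bottom edge {0,2}, top edge {1,3}; the bottom faces are
  those opposite 1 and 3 (they contain the bottom edge), the top faces those opposite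
  0 and 2.  In the rhombus picture (viewed from above, vertices 0,1,2,3 in cyclic order)
  the sides {0,1},{2,3} have positive slope and {1,2},{0,3} negative slope.\<close>

definition verts :: "nat set" where "verts = {0,1,2,3}"
definition bot_edge :: "nat set" where "bot_edge = {0,2}"
definition top_edge :: "nat set" where "top_edge = {1,3}"
definition top_faces :: "nat set" where "top_faces = {0,2}"
definition bot_faces :: "nat set" where "bot_faces = {1,3}"
definition pos_sides :: "nat set set" where "pos_sides = {{0,1},{2,3}}"
definition neg_sides :: "nat set set" where "neg_sides = {{1,2},{0,3}}"

definition face_edges :: "nat \<Rightarrow> nat set set" where
  "face_edges k = {{i,j} | i j. i \<in> verts - {k} \<and> j \<in> verts - {k} \<and> i \<noteq> j}"

definition ord4 :: "nat \<Rightarrow> nat \<Rightarrow> nat \<Rightarrow> nat \<Rightarrow> nat \<Rightarrow> nat" where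
  "ord4 i j k l = (\<lambda>n. if n = 0 then i else if n = 1 then j else if n = 2 then k
                        else if n = 3 then l else n)"

text \<open>For a tetrahedron T and a top face k \<in> {0,2},
  tri_up T k is the tetrahedron glued above that face and tri_gl T k the gluing, a
  permutation of {0,1,2,3} sending k to the index of the corresponding bottom face of
  tri_up T k and the vertices of the face to the vertices they are glued to.
  tri_fc T k is the face of the triangulation that is the local face k of T,
  tri_ed T a the edge of the triangulation that is the local edge a of T, and
  tri_veer e = True iff the edge e is right-veering.\<close>

record ('t, 'f, 'e) tri =
  tri_up :: "'t \<Rightarrow> nat \<Rightarrow> 't"
  tri_gl :: "'t \<Rightarrow> nat \<Rightarrow> nat \<Rightarrow> nat"
  tri_fc :: "'t \<Rightarrow> nat \<Rightarrow> 'f"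
  tri_ed :: "'t \<Rightarrow> nat set \<Rightarrow> 'e"
  tri_veer :: "'e \<Rightarrow> bool"

definition oedges :: "('t \<times> nat \<times> nat) set" where
  "oedges = {(T, i, j). i \<in> verts \<and> j \<in> verts \<and> i \<noteq> j}"

definition ostep :: "('t, 'f, 'e, 'z) tri_scheme \<Rightarrow> (('t \<times> nat \<times> nat) \<times> ('t \<times> nat \<times> nat)) set" where
  "ostep \<tau> = {((T, i, j), (tri_up \<tau> T k, tri_gl \<tau> T k i, tri_gl \<tau> T k j)) | T i j k.
                 k \<in> top_faces \<and> i \<in> verts - {k} \<and> j \<in> verts - {k} \<and> i \<noteq> j}"

definition oequiv :: "('t, 'f, 'e, 'z) tri_scheme \<Rightarrow> (('t \<times> nat \<times> nat) \<times> ('t \<times> nat \<times> nat)) set" where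
  "oequiv \<tau> = (ostep \<tau> \<union> (ostep \<tau>)\<inverse>)\<^sup>*"

definition tstep :: "('t, 'f, 'e, 'z) tri_scheme \<Rightarrow> ('t \<times> 't) set" where
  "tstep \<tau> = {(T, tri_up \<tau> T k) | T k. k \<in> top_faces}"

text \<open>Gluings are odd permutations, i.e. orientation reversing for the coherently oriented
  labellings, so M is oriented; faces are glued top-to-bottom (coorientation); tri_fc and
  tri_ed identify faces and edges exactly as the gluings do; no edge is glued to itself
  with reversed orientation (so M is a manifold); the taut angle sum around every edge is
  2 pi (angle pi at the top and bottom edge of a tetrahedron, 0 at the sides); the veer is
  as in the rhombus model.\<close>

definition veering_triangulation :: "('t::finite, 'f::finite, 'e::finite, 'z) tri_scheme \<Rightarrow> bool" where
  "veering_triangulation \<tau> \<longleftrightarrow>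
     (\<forall>T. \<forall>k \<in> top_faces. tri_gl \<tau> T k permutes verts \<and> \<not> evenperm (tri_gl \<tau> T k)
          \<and> tri_gl \<tau> T k k \<in> bot_faces
          \<and> tri_fc \<tau> T k = tri_fc \<tau> (tri_up \<tau> T k) (tri_gl \<tau> T k k))
   \<and> bij_betw (\<lambda>(T, k). tri_fc \<tau> T k) (UNIV \<times> top_faces) UNIV
   \<and> bij_betw (\<lambda>(T, k). tri_fc \<tau> T k) (UNIV \<times> bot_faces) UNIV
   \<and> (\<forall>e. \<exists>T i j. i \<in> verts \<and> j \<in> verts \<and> i \<noteq> j \<and> tri_ed \<tau> T {i, j} = e)
   \<and> (\<forall>x \<in> oedges. \<forall>y \<in> oedges.
        (case (x, y) of ((T, i, j), (T', i', j')) \<Rightarrow>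
           tri_ed \<tau> T {i, j} = tri_ed \<tau> T' {i', j'} \<longleftrightarrow>
           ((T, i, j), (T', i', j')) \<in> oequiv \<tau> \<or> ((T, i, j), (T', j', i')) \<in> oequiv \<tau>))
   \<and> (\<forall>(T, i, j) \<in> oedges. ((T, i, j), (T, j, i)) \<notin> oequiv \<tau>)
   \<and> ((tstep \<tau> \<union> (tstep \<tau>)\<inverse>)\<^sup>* = UNIV)
   \<and> (\<forall>e. card {(T, a). a \<in> {bot_edge, top_edge} \<and> tri_ed \<tau> T a = e} = 2)
   \<and> (\<forall>T. (\<forall>a \<in> pos_sides. tri_veer \<tau> (tri_ed \<tau> T a)) \<and>
          (\<forall>a \<in> neg_sides. \<not> tri_veer \<tau> (tri_ed \<tau> T a)))"

text \<open>M deformation retracts onto the dual 2-complex: one vertex per tetrahedron, one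
  1-cell per face f (oriented along the coorientation, from the tetrahedron below f to the
  one above), one 2-cell per edge.  1-chains are functions 'f => int.\<close>

definition chain_bd :: "('t, 'f, 'e, 'z) tri_scheme \<Rightarrow> ('f \<Rightarrow> int) \<Rightarrow> 't \<Rightarrow> int" where
  "chain_bd \<tau> c T = (\<Sum>k \<in> bot_faces. c (tri_fc \<tau> T k)) - (\<Sum>k \<in> top_faces. c (tri_fc \<tau> T k))"

definition is_cycle :: "('t, 'f, 'e, 'z) tri_scheme \<Rightarrow> ('f \<Rightarrow> int) \<Rightarrow> bool" where
  "is_cycle \<tau> c \<longleftrightarrow> (\<forall>T. chain_bd \<tau> c T = 0)"

text \<open>For an oriented local edge (i,j) the loop around it passes through the tetrahedron
  entering through the face opposite the vertex k with (i,j,k,l) an even ordering.\<close>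
definition enter_vertex :: "nat \<Rightarrow> nat \<Rightarrow> nat" where
  "enter_vertex i j = (THE k. k \<in> verts - {i, j} \<and> evenperm (ord4 i j k (6 - i - j - k)))"

definition enter_term :: "('t, 'f, 'e, 'z) tri_scheme \<Rightarrow> 't \<times> nat \<times> nat \<Rightarrow> 'f \<Rightarrow> int" where
  "enter_term \<tau> x f = (case x of (T, i, j) \<Rightarrow>
      (if tri_fc \<tau> T (enter_vertex i j) = f
       then (if enter_vertex i j \<in> bot_faces then 1 else -1) else 0))"

text \<open>boundary of the 2-cell dual to the (oriented) edge through the oriented local edge x\<close>
definition cell_bd :: "('t::finite, 'f, 'e, 'z) tri_scheme \<Rightarrow> 't \<times> nat \<times> nat \<Rightarrow> 'f \<Rightarrow> int" where
  "cell_bd \<tau> x f = (\<Sum>y \<in> {y \<in> oedges. (x, y) \<in> oequiv \<tau>}. enter_term \<tau> y f)"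

definition is_boundary :: "('t::finite, 'f, 'e, 'z) tri_scheme \<Rightarrow> ('f \<Rightarrow> int) \<Rightarrow> bool" where
  "is_boundary \<tau> c \<longleftrightarrow> (\<exists>a :: 't \<times> nat \<times> nat \<Rightarrow> int. \<forall>f. c f = (\<Sum>x \<in> oedges. a x * cell_bd \<tau> x f))"

definition zsmul :: "int \<Rightarrow> 'g::ab_group_add \<Rightarrow> 'g" where
  "zsmul n g = (if 0 \<le> n then (\<Sum>_ \<in> {..<nat n}. g) else - (\<Sum>_ \<in> {..<nat (- n)}. g))"

definition eval_chain :: "('f::finite \<Rightarrow> 'g::ab_group_add) \<Rightarrow> ('f \<Rightarrow> int) \<Rightarrow> 'g" where
  "eval_chain \<phi> c = (\<Sum>f \<in> UNIV. zsmul (c f) (\<phi> f))"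

text \<open>The universal free abelian cover: \<phi> assigns to each dual 1-cell (face) its deck
  translation, relative to a choice of lifts of the tetrahedra.  The induced map
  H_1(M) \<rightarrow> G is surjective with kernel exactly the torsion, i.e. G = H_1(M;Z)/torsion.\<close>
definition univ_free_abelian_cover ::
  "('t::finite, 'f::finite, 'e, 'z) tri_scheme \<Rightarrow> ('f \<Rightarrow> 'g::ab_group_add) \<Rightarrow> bool" where
  "univ_free_abelian_cover \<tau> \<phi> \<longleftrightarrow>
     (\<forall>g. \<exists>c. is_cycle \<tau> c \<and> eval_chain \<phi> c = g)
   \<and> (\<forall>c. is_cycle \<tau> c \<longrightarrow>
         (eval_chain \<phi> c = 0 \<longleftrightarrow> (\<exists>n::int. n > 0 \<and> is_boundary \<tau> (\<lambda>f. n * c f))))"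

text \<open>A choice of lifts of the edges: the local edge a of the chosen lift of T is the
  translate by lift_pos T a of the chosen lift of the edge tri_ed T a.  Consistency with
  the gluing of the chosen lift of T along its top face k to the \<phi>-translate of the chosen
  lift of the tetrahedron above.\<close>
definition edge_lifts ::
  "('t, 'f, 'e, 'z) tri_scheme \<Rightarrow> ('f \<Rightarrow> 'g::ab_group_add) \<Rightarrow> ('t \<Rightarrow> nat set \<Rightarrow> 'g) \<Rightarrow> bool" where
  "edge_lifts \<tau> \<phi> p \<longleftrightarrow>
     (\<forall>T. \<forall>k \<in> top_faces. \<forall>i \<in> verts - {k}. \<forall>j \<in> verts - {k}. i \<noteq> j \<longrightarrow>
        p T {i, j} = \<phi> (tri_fc \<tau> T k) + p (tri_up \<tau> T k) {tri_gl \<tau> T k i, tri_gl \<tau> T k j})"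

type_synonym 'g zgroupring = "'g \<Rightarrow>\<^sub>0 int"

definition mon :: "'g::ab_group_add \<Rightarrow> 'g zgroupring" where
  "mon g = Poly_Mapping.single g 1"

definition tet_above :: "('t, 'f, 'e, 'z) tri_scheme \<Rightarrow> 'e \<Rightarrow> 't" where
  "tet_above \<tau> e = (THE T. tri_ed \<tau> T bot_edge = e)"

definition opp_sides :: "('t, 'f, 'e, 'z) tri_scheme \<Rightarrow> 't \<Rightarrow> nat set set" where
  "opp_sides \<tau> T = (if tri_veer \<tau> (tri_ed \<tau> T top_edge) then neg_sides else pos_sides)"

text \<open>relation b - \<Sum> (translates of the other edges) of the chosen lift of T, normalised
  so that b has coefficient 1 (over the local edges in A)\<close>
definition rel_vec ::
  "('t, 'f, 'e, 'z) tri_scheme \<Rightarrow> ('t \<Rightarrow> nat set \<Rightarrow> 'g::ab_group_add) \<Rightarrow> 't \<Rightarrow> nat set set \<Rightarrow> 'e \<Rightarrow> 'g zgroupring" where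
  "rel_vec \<tau> p T A d =
     (if tri_ed \<tau> T bot_edge = d then 1 else 0)
     - (\<Sum>a \<in> A. if tri_ed \<tau> T a = d then mon (p T a - p T bot_edge) else 0)"

text \<open>L : Z[G]^E \<rightarrow> Z[G]^E, entry (d, e) = coefficient of d in the image of e\<close>
definition Lmat ::
  "('t, 'f, 'e, 'z) tri_scheme \<Rightarrow> ('t \<Rightarrow> nat set \<Rightarrow> 'g::ab_group_add) \<Rightarrow> 'e \<Rightarrow> 'e \<Rightarrow> 'g zgroupring" where
  "Lmat \<tau> p d e = rel_vec \<tau> p (tet_above \<tau> e) ({top_edge} \<union> opp_sides \<tau> (tet_above \<tau> e)) d"

definition face_above :: "('t, 'f, 'e, 'z) tri_scheme \<Rightarrow> 'f \<Rightarrow> 't \<times> nat" where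
  "face_above \<tau> f = (THE (T, k). k \<in> bot_faces \<and> tri_fc \<tau> T k = f)"

definition LFmat ::
  "('t, 'f, 'e, 'z) tri_scheme \<Rightarrow> ('t \<Rightarrow> nat set \<Rightarrow> 'g::ab_group_add) \<Rightarrow> 'e \<Rightarrow> 'f \<Rightarrow> 'g zgroupring" where
  "LFmat \<tau> p d f = (case face_above \<tau> f of (T, k) \<Rightarrow>
       rel_vec \<tau> p T (face_edges k - {bot_edge}) d)"

definition col_module :: "('e \<Rightarrow> 'c::finite \<Rightarrow> 'r::comm_ring_1) \<Rightarrow> ('e \<Rightarrow> 'r) set" where
  "col_module A = {v. \<exists>x :: 'c \<Rightarrow> 'r. v = (\<lambda>d. \<Sum>c \<in> UNIV. A d c * x c)}"

definition veering_poly ::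
  "('t, 'f, 'e::finite, 'z) tri_scheme \<Rightarrow> ('t \<Rightarrow> nat set \<Rightarrow> 'g::ab_group_add) \<Rightarrow> 'g zgroupring" where
  "veering_poly \<tau> p = det (\<chi> d e. Lmat \<tau> p d e)"

text \<open>the |E| x |E| minors of L^triangle (up to sign: columns selected by an injection)\<close>
definition face_minors ::
  "('t, 'f, 'e::finite, 'z) tri_scheme \<Rightarrow> ('t \<Rightarrow> nat set \<Rightarrow> 'g::ab_group_add) \<Rightarrow> 'g zgroupring set" where
  "face_minors \<tau> p = {det (\<chi> d e. LFmat \<tau> p d (\<sigma> e)) | \<sigma> :: 'e \<Rightarrow> 'f. inj \<sigma>}"

definition is_gcd_of :: "'r::comm_ring_1 \<Rightarrow> 'r set \<Rightarrow> bool" where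
  "is_gcd_of g S \<longleftrightarrow> (\<forall>m \<in> S. g dvd m) \<and> (\<forall>h. (\<forall>m \<in> S. h dvd m) \<longrightarrow> h dvd g)"

end

(*
  Each tetrahedron relation is a Z[G]-combination of two face relations.  In a tetrahedron with
  bottom edge b and top edge t, let w be the side edge shared by a bottom face and a top face f
  and having the same veer as t; the remaining sides s (of the bottom face) and u (of f) have the
  opposite veer, so the tetrahedron relation is b = t + u + s.  Orientation and veer force w to
  be the bottom edge of the tetrahedron glued above f, so the face relations read b = w + s and
  w = u + t, and their sum is the tetrahedron relation.  Thus every column of L lies in the image
  of the face matrix, L = L^triangle X, and expanding det (L^triangle X) multilinearly in its
  columns writes it as a combination of maximal minors of L^triangle, each divisible by Theta.
*)

theory Submission
  imports Defs
begin

section \<open>Determinants of matrices factoring through a wider matrix\<close>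

lemma dvd_det_if_rows_in_span:
  fixes C :: "'f::finite \<Rightarrow> 'r::comm_ring_1^'n::finite"
    and x :: "'n \<Rightarrow> 'f \<Rightarrow> 'r"
  assumes minors: "\<And>\<rho>::'n \<Rightarrow> 'f. inj \<rho> \<Longrightarrow> h dvd det (\<chi> i. C (\<rho> i))"
  shows "h dvd det (\<chi> i. \<Sum>f\<in>UNIV. x i f *s C f)"
proof -
  have "h dvd det (\<chi> i. if i \<in> R then \<Sum>f\<in>UNIV. x i f *s C f else C (\<rho> i))"
    if "finite R" for R and \<rho> :: "'n \<Rightarrow> 'f"
    using that
  proof (induction R arbitrary: \<rho> rule: finite_induct)
    case empty
    show ?case
    proof (cases "inj \<rho>")
      case True
      then show ?thesis using minors by simp
    next
      case False
      then obtain i j where ij: "i \<noteq> j" "\<rho> i = \<rho> j" unfolding inj_def by blast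
      then have "det (\<chi> i. C (\<rho> i)) = 0"
        by (intro det_identical_rows[OF ij(1)]) (simp add: row_def)
      then show ?thesis by simp
    qed
  next
    case (insert z R)
    let ?M = "\<lambda>v. \<chi> i. if i = z then v else if i \<in> R then \<Sum>f\<in>UNIV. x i f *s C f else C (\<rho> i)"
    have "(\<chi> i. if i \<in> insert z R then \<Sum>f\<in>UNIV. x i f *s C f else C (\<rho> i))
        = ?M (\<Sum>f\<in>UNIV. x z f *s C f)"
      by (simp add: vec_eq_iff)
    moreover have "det (?M (\<Sum>f\<in>UNIV. x z f *s C f)) = (\<Sum>f\<in>UNIV. x z f * det (?M (C f)))"
      by (simp add: det_linear_row_sum[where a = "\<lambda>_ f. x z f *s C f"] det_row_mul)
    moreover have "?M (C f) = (\<chi> i. if i \<in> R then \<Sum>f\<in>UNIV. x i f *s C f else C ((\<rho>(z := f)) i))"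
      for f using insert.hyps(2) by (auto simp: vec_eq_iff)
    ultimately show ?case
      using insert.IH by (simp add: dvd_sum)
  qed
  from this[of UNIV] show ?thesis by simp
qed

lemma col_module_lincomb:
  fixes B :: "'d \<Rightarrow> 'f::finite \<Rightarrow> 'r::comm_ring_1"
  shows "(\<lambda>d. B d f * a + B d g * b) \<in> col_module B"
proof -
  have "(\<lambda>d. B d f * a + B d g * b)
      = (\<lambda>d. \<Sum>c\<in>UNIV. B d c * ((if c = f then a else 0) + (if c = g then b else 0)))"
    by (simp add: fun_eq_iff distrib_left sum.distrib if_distrib[of "\<lambda>x. B _ _ * x"] cong: if_cong)
  then show ?thesis
    unfolding col_module_def by (intro CollectI exI)
qed

lemma col_module_factorization:
  fixes A :: "'d \<Rightarrow> 'e \<Rightarrow> 'r::comm_ring_1" and B :: "'d \<Rightarrow> 'f::finite \<Rightarrow> 'r"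
  assumes "\<And>e. (\<lambda>d. A d e) \<in> col_module B"
  shows "\<exists>X. \<forall>e d. A d e = (\<Sum>f\<in>UNIV. B d f * X e f)"
proof -
  have "\<forall>e. \<exists>x. \<forall>d. A d e = (\<Sum>f\<in>UNIV. B d f * x f)"
    using assms unfolding col_module_def by (simp add: fun_eq_iff)
  then show ?thesis
    by metis
qed

lemma col_module_subset:
  fixes A :: "'d \<Rightarrow> 'e::finite \<Rightarrow> 'r::comm_ring_1" and B :: "'d \<Rightarrow> 'f::finite \<Rightarrow> 'r"
  assumes "\<And>e. (\<lambda>d. A d e) \<in> col_module B"
  shows "col_module A \<subseteq> col_module B"
proof
  obtain X where X: "\<And>e d. A d e = (\<Sum>f\<in>UNIV. B d f * X e f)"
    using col_module_factorization[of A B, OF assms] by blast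
  fix v assume "v \<in> col_module A"
  then obtain y where "v = (\<lambda>d. \<Sum>e\<in>UNIV. A d e * y e)"
    unfolding col_module_def by blast
  also have "\<dots> = (\<lambda>d. \<Sum>f\<in>UNIV. B d f * (\<Sum>e\<in>UNIV. X e f * y e))"
    by (simp add: X sum_distrib_left sum_distrib_right mult.assoc sum.swap[of _ "UNIV :: 'e set"])
  finally show "v \<in> col_module B"
    unfolding col_module_def by (intro CollectI exI)
qed

lemma dvd_det_if_columns_in_col_module:
  fixes A :: "'e::finite \<Rightarrow> 'e \<Rightarrow> 'r::comm_ring_1" and B :: "'e \<Rightarrow> 'f::finite \<Rightarrow> 'r"
  assumes columns: "\<And>e. (\<lambda>d. A d e) \<in> col_module B"
    and minors: "\<And>\<sigma>::'e \<Rightarrow> 'f. inj \<sigma> \<Longrightarrow> h dvd det (\<chi> d e. B d (\<sigma> e))"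
  shows "h dvd det (\<chi> d e. A d e)"
proof -
  obtain X where X: "\<And>e d. A d e = (\<Sum>f\<in>UNIV. B d f * X e f)"
    using col_module_factorization[of A B, OF columns] by blast
  define C where "C f = (\<chi> d. B d f)" for f
  have "transpose (\<chi> d e. A d e) = (\<chi> e. \<Sum>f\<in>UNIV. X e f *s C f)"
    by (simp add: transpose_def vec_eq_iff sum_component X C_def mult.commute)
  moreover have "h dvd det (\<chi> e. \<Sum>f\<in>UNIV. X e f *s C f)"
  proof (rule dvd_det_if_rows_in_span)
    fix \<rho> :: "'e \<Rightarrow> 'f" assume "inj \<rho>"
    moreover have "(\<chi> e. C (\<rho> e)) = transpose (\<chi> d e. B d (\<rho> e))"
      by (simp add: transpose_def vec_eq_iff C_def)
    ultimately show "h dvd det (\<chi> e. C (\<rho> e))"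
      using minors by (simp add: det_transpose)
  qed
  ultimately show ?thesis
    by (metis det_transpose)
qed

section \<open>Combinatorics of a single veering tetrahedron\<close>

lemma doubleton_in_face_edges:
  "i \<in> verts - {k} \<Longrightarrow> j \<in> verts - {k} \<Longrightarrow> i \<noteq> j \<Longrightarrow> {i, j} \<in> face_edges k"
  unfolding face_edges_def by blast

lemma side_edges_of_bot_face:
  "face_edges 1 - {bot_edge} = {{0,3}, {2,3}}" (is "?F1 = ?S1")
  "face_edges 3 - {bot_edge} = {{0,1}, {1,2}}" (is "?F3 = ?S3")
proof -
  have "?F1 \<subseteq> ?S1" "?F3 \<subseteq> ?S3"
    by (auto simp: face_edges_def verts_def bot_edge_def insert_commute)
  moreover have "?S1 \<subseteq> ?F1" "?S3 \<subseteq> ?F3"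
    by (auto simp: verts_def bot_edge_def doubleton_eq_iff intro!: doubleton_in_face_edges)
  ultimately show "?F1 = ?S1" "?F3 = ?S3"
    by (simp_all only: set_eq_subset)
qed

lemma edges_of_face_2: "{0,1} \<in> face_edges 2" "{0,3} \<in> face_edges 2" "{1,3} \<in> face_edges 2"
  by (auto simp: verts_def intro!: doubleton_in_face_edges)

lemma evenperm_double_transposition_on_verts:
  assumes "\<sigma> permutes verts" "{a, b, c, d} \<subseteq> verts" "a \<noteq> b" "c \<noteq> d"
    and "\<And>n. n \<in> verts \<Longrightarrow> \<sigma> n = Transposition.transpose a b (Transposition.transpose c d n)"
  shows "evenperm \<sigma>"
proof -
  have "\<sigma> = Transposition.transpose a b \<circ> Transposition.transpose c d"
  proof
    fix n
    show "\<sigma> n = (Transposition.transpose a b \<circ> Transposition.transpose c d) n"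
      using assms by (cases "n \<in> verts") (auto simp: permutes_not_in Transposition.transpose_def)
  qed
  with assms(3,4) show ?thesis
    by (simp add: evenperm_comp permutation_swap_id evenperm_swap)
qed

text \<open>Here (a, c, k, d) = (\<sigma> 0, \<sigma> 1, \<sigma> 2, \<sigma> 3) for the gluing \<sigma> above a top face; the two excluded
  orderings are the even ones compatible with the veers.\<close>

lemma bot_face_configuration:
  fixes a c k d :: nat and v :: "nat set \<Rightarrow> bool"
  assumes "{a, c, d} \<subseteq> verts" "k \<in> bot_faces" "distinct [a, c, k, d]"
    and "(a, c, k, d) \<notin> {(1, 0, 3, 2), (3, 2, 1, 0)}"
    and "\<forall>x\<in>pos_sides. v x" "\<forall>x\<in>neg_sides. \<not> v x" "v {a, c}" "\<not> v {a, d}"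
  shows "if v {c, d}
    then {a, c} = bot_edge \<and> face_edges k - {bot_edge} = {{a, d}, {c, d}}
    else {a, d} = bot_edge \<and> face_edges k - {bot_edge} = {{a, c}, {c, d}}"
proof -
  have "v {0,1}" "v {2,3}" "\<not> v {1,2}" "\<not> v {0,3}"
    using assms(5,6) by (auto simp: pos_sides_def neg_sides_def)
  moreover have "a \<in> {0,1,2,3}" "c \<in> {0,1,2,3}" "d \<in> {0,1,2,3}" "k = 1 \<or> k = 3"
    using assms(1,2) by (auto simp: verts_def bot_faces_def)
  ultimately show ?thesis
    using assms(3,4,7,8)
    by (elim insertE emptyE disjE)
      (simp_all add: side_edges_of_bot_face[unfolded bot_edge_def One_nat_def] bot_edge_def
        insert_commute doubleton_eq_iff)
qed

lemma bot_edge_above_top_face: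
  fixes \<sigma> :: "nat \<Rightarrow> nat" and v :: "nat set \<Rightarrow> bool"
  assumes \<sigma>: "\<sigma> permutes verts" "\<not> evenperm \<sigma>" "\<sigma> 2 \<in> bot_faces"
    and rhombus: "\<forall>a\<in>pos_sides. v a" "\<forall>a\<in>neg_sides. \<not> v a"
    and veers: "v (\<sigma> ` {0,1})" "\<not> v (\<sigma> ` {0,3})"
  shows "if v (\<sigma> ` {1,3})
    then \<sigma> ` {0,1} = bot_edge \<and> face_edges (\<sigma> 2) - {bot_edge} = {\<sigma> ` {0,3}, \<sigma> ` {1,3}}
    else \<sigma> ` {0,3} = bot_edge \<and> face_edges (\<sigma> 2) - {bot_edge} = {\<sigma> ` {0,1}, \<sigma> ` {1,3}}"
proof -
  have "{\<sigma> 0, \<sigma> 1, \<sigma> 3} \<subseteq> verts"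
    using permutes_in_image[OF \<sigma>(1)] by (simp add: verts_def)
  moreover have "distinct [\<sigma> 0, \<sigma> 1, \<sigma> 2, \<sigma> 3]"
    using permutes_inj[OF \<sigma>(1)] by (simp add: inj_eq)
  moreover have "(\<sigma> 0, \<sigma> 1, \<sigma> 2, \<sigma> 3) \<notin> {(1, 0, 3, 2), (3, 2, 1, 0)}"
  proof
    assume "(\<sigma> 0, \<sigma> 1, \<sigma> 2, \<sigma> 3) \<in> {(1, 0, 3, 2), (3, 2, 1, 0)}"
    then consider "\<sigma> 0 = 1" "\<sigma> 1 = 0" "\<sigma> 2 = 3" "\<sigma> 3 = 2" | "\<sigma> 0 = 3" "\<sigma> 1 = 2" "\<sigma> 2 = 1" "\<sigma> 3 = 0"
      by auto
    then have "evenperm \<sigma>"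
    proof cases
      case 1
      then show ?thesis
        by (intro evenperm_double_transposition_on_verts[OF \<sigma>(1), of 0 1 2 3])
          (auto simp: verts_def Transposition.transpose_def)
    next
      case 2
      then show ?thesis
        by (intro evenperm_double_transposition_on_verts[OF \<sigma>(1), of 0 3 1 2])
          (auto simp: verts_def Transposition.transpose_def)
    qed
    with \<sigma>(2) show False ..
  qed
  ultimately show ?thesis
    unfolding image_insert image_empty
    by (rule bot_face_configuration[OF _ \<sigma>(3) _ _ rhombus veers[unfolded image_insert image_empty]])
qed

section \<open>Tetrahedron relations as combinations of face relations\<close>

text \<open>The relation b = \<Sum> A among local edges of the chosen lift of T, with b normalised to
  coefficient 1; rel_vec is the case b = bot_edge.  A face relation of the top face of T is of
  this form for an edge b other than the bottom edge of T.\<close>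

definition local_relation ::
  "('t, 'f, 'e, 'z) tri_scheme \<Rightarrow> ('t \<Rightarrow> nat set \<Rightarrow> 'g::ab_group_add) \<Rightarrow> 't \<Rightarrow> nat set \<Rightarrow> nat set set
    \<Rightarrow> 'e \<Rightarrow> 'g zgroupring" where
  "local_relation \<tau> p T b A d =
     of_bool (tri_ed \<tau> T b = d) - (\<Sum>a\<in>A. mon (p T a - p T b) * of_bool (tri_ed \<tau> T a = d))"

lemma rel_vec_eq_local_relation: "rel_vec \<tau> p T A d = local_relation \<tau> p T bot_edge A d"
  unfolding rel_vec_def local_relation_def by (auto simp: of_bool_def intro!: sum.cong)

lemma mon_mult: "mon x * mon y = mon (x + y)"
  by (simp add: mon_def mult_single)

lemma local_relation_split:
  assumes "distinct [t, u, s]" "w \<noteq> s" "u \<noteq> t"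
  shows "local_relation \<tau> p T b {t, u, s} d
    = local_relation \<tau> p T b {w, s} d + mon (p T w - p T b) * local_relation \<tau> p T w {u, t} d"
proof -
  have "(\<Sum>a\<in>{t, u, s}. g a) = g t + g u + g s" "(\<Sum>a\<in>{w, s}. g a) = g w + g s"
    "(\<Sum>a\<in>{u, t}. g a) = g u + g t" for g :: "nat set \<Rightarrow> 'a zgroupring"
    using assms by (simp_all add: add.assoc)
  then show ?thesis
    unfolding local_relation_def by (simp add: algebra_simps mon_mult)
qed

lemma veering_gluing:
  assumes "veering_triangulation \<tau>" "k \<in> top_faces"
  shows "tri_gl \<tau> T k permutes verts" "\<not> evenperm (tri_gl \<tau> T k)" "tri_gl \<tau> T k k \<in> bot_faces"
    "tri_fc \<tau> T k = tri_fc \<tau> (tri_up \<tau> T k) (tri_gl \<tau> T k k)"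
  using assms unfolding veering_triangulation_def by blast+

lemma veering_rhombus:
  assumes "veering_triangulation \<tau>"
  shows "a \<in> pos_sides \<Longrightarrow> tri_veer \<tau> (tri_ed \<tau> T a)" "a \<in> neg_sides \<Longrightarrow> \<not> tri_veer \<tau> (tri_ed \<tau> T a)"
  using assms unfolding veering_triangulation_def by blast+

lemma face_above_tri_fc:
  assumes "veering_triangulation \<tau>" "k \<in> bot_faces"
  shows "face_above \<tau> (tri_fc \<tau> T k) = (T, k)"
proof -
  have "inj_on (\<lambda>(T, k). tri_fc \<tau> T k) (UNIV \<times> bot_faces)"
    using assms(1) unfolding veering_triangulation_def by (blast dest: bij_betw_imp_inj_on)
  then show ?thesis
    unfolding face_above_def using assms(2)
    by (intro the_equality) (auto simp: inj_on_def)
qed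

lemma veering_edge_identification:
  assumes "veering_triangulation \<tau>" "(T, i, j) \<in> oedges" "(T', i', j') \<in> oedges"
    and "((T, i, j), (T', i', j')) \<in> oequiv \<tau>"
  shows "tri_ed \<tau> T {i, j} = tri_ed \<tau> T' {i', j'}"
proof -
  have "\<forall>x \<in> oedges. \<forall>y \<in> oedges.
        (case (x, y) of ((T, i, j), (T', i', j')) \<Rightarrow>
           tri_ed \<tau> T {i, j} = tri_ed \<tau> T' {i', j'} \<longleftrightarrow>
           ((T, i, j), (T', i', j')) \<in> oequiv \<tau> \<or> ((T, i, j), (T', j', i')) \<in> oequiv \<tau>)"
    using assms(1) unfolding veering_triangulation_def by blast
  from bspec[OF bspec[OF this assms(2)] assms(3)] assms(4) show ?thesis
    by simp
qed

lemma tri_ed_glued: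
  assumes "veering_triangulation \<tau>" "k \<in> top_faces" "a \<in> face_edges k"
  shows "tri_ed \<tau> (tri_up \<tau> T k) (tri_gl \<tau> T k ` a) = tri_ed \<tau> T a"
proof -
  let ?\<sigma> = "tri_gl \<tau> T k" and ?T' = "tri_up \<tau> T k"
  obtain i j where a: "a = {i, j}" "i \<in> verts - {k}" "j \<in> verts - {k}" "i \<noteq> j"
    using assms(3) unfolding face_edges_def by blast
  have "((T, i, j), (?T', ?\<sigma> i, ?\<sigma> j)) \<in> ostep \<tau>"
    unfolding ostep_def using a assms(2) by blast
  then have "((T, i, j), (?T', ?\<sigma> i, ?\<sigma> j)) \<in> oequiv \<tau>"
    unfolding oequiv_def by blast
  moreover have "(T, i, j) \<in> oedges" "(?T', ?\<sigma> i, ?\<sigma> j) \<in> oedges"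
    using a veering_gluing(1)[OF assms(1,2)]
    by (auto simp: oedges_def permutes_in_image dest: permutes_inj injD)
  ultimately show ?thesis
    using a(1) veering_edge_identification[OF assms(1)] by simp
qed

lemma lift_glued:
  assumes "edge_lifts \<tau> \<phi> p" "k \<in> top_faces" "a \<in> face_edges k"
  shows "p (tri_up \<tau> T k) (tri_gl \<tau> T k ` a) = p T a - \<phi> (tri_fc \<tau> T k)"
  using assms unfolding edge_lifts_def face_edges_def by (auto simp: algebra_simps)

lemma local_relation_glued:
  assumes "veering_triangulation \<tau>" "edge_lifts \<tau> \<phi> p" "k \<in> top_faces"
    and "b \<in> face_edges k" "A \<subseteq> face_edges k"
  shows "local_relation \<tau> p (tri_up \<tau> T k) (tri_gl \<tau> T k ` b) ((`) (tri_gl \<tau> T k) ` A) d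
    = local_relation \<tau> p T b A d"
proof -
  let ?\<sigma> = "tri_gl \<tau> T k" and ?T' = "tri_up \<tau> T k"
  have "inj ?\<sigma>"
    using permutes_inj[OF veering_gluing(1)[OF assms(1,3)]] .
  then have "inj_on ((`) ?\<sigma>) A"
    using inj_on_image inj_on_subset subset_UNIV by metis
  then have "(\<Sum>a\<in>(`) ?\<sigma> ` A. mon (p ?T' a - p ?T' (?\<sigma> ` b)) * of_bool (tri_ed \<tau> ?T' a = d))
      = (\<Sum>a\<in>A. mon (p ?T' (?\<sigma> ` a) - p ?T' (?\<sigma> ` b)) * of_bool (tri_ed \<tau> ?T' (?\<sigma> ` a) = d))"
    by (simp add: sum.reindex)
  also have "\<dots> = (\<Sum>a\<in>A. mon (p T a - p T b) * of_bool (tri_ed \<tau> T a = d))"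
  proof (rule sum.cong)
    fix a assume "a \<in> A"
    with assms(4,5) have "a \<in> face_edges k" "b \<in> face_edges k" by auto
    then show "mon (p ?T' (?\<sigma> ` a) - p ?T' (?\<sigma> ` b)) * of_bool (tri_ed \<tau> ?T' (?\<sigma> ` a) = d)
      = mon (p T a - p T b) * of_bool (tri_ed \<tau> T a = d)"
      by (simp only: tri_ed_glued[OF assms(1,3)] lift_glued[OF assms(2,3)]) simp
  qed simp
  finally show ?thesis
    unfolding local_relation_def using assms(4) by (simp add: tri_ed_glued[OF assms(1,3)])
qed

lemma veering_bot_edge_above_top_face:
  fixes T
  assumes V: "veering_triangulation \<tau>"
  defines "\<sigma> \<equiv> tri_gl \<tau> T 2"
  shows "if tri_veer \<tau> (tri_ed \<tau> T top_edge)
    then \<sigma> ` {0,1} = bot_edge \<and> face_edges (\<sigma> 2) - {bot_edge} = {\<sigma> ` {0,3}, \<sigma> ` top_edge}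
    else \<sigma> ` {0,3} = bot_edge \<and> face_edges (\<sigma> 2) - {bot_edge} = {\<sigma> ` {0,1}, \<sigma> ` top_edge}"
proof -
  define T' where "T' = tri_up \<tau> T 2"
  have top2: "(2::nat) \<in> top_faces"
    by (simp add: top_faces_def)
  have veer_glued: "tri_veer \<tau> (tri_ed \<tau> T' (\<sigma> ` a)) = tri_veer \<tau> (tri_ed \<tau> T a)" if "a \<in> face_edges 2" for a
    using tri_ed_glued[OF V top2 that] by (simp add: \<sigma>_def T'_def)
  have rhombus: "\<forall>a\<in>pos_sides. tri_veer \<tau> (tri_ed \<tau> T' a)" "\<forall>a\<in>neg_sides. \<not> tri_veer \<tau> (tri_ed \<tau> T' a)"
    using veering_rhombus(1)[OF V] veering_rhombus(2)[OF V] by blast+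
  have "tri_veer \<tau> (tri_ed \<tau> T' (\<sigma> ` {0,1}))"
    unfolding veer_glued[OF edges_of_face_2(1)] by (rule veering_rhombus(1)[OF V]) (simp add: pos_sides_def)
  moreover have "\<not> tri_veer \<tau> (tri_ed \<tau> T' (\<sigma> ` {0,3}))"
    unfolding veer_glued[OF edges_of_face_2(2)] by (rule veering_rhombus(2)[OF V]) (simp add: neg_sides_def)
  ultimately have "if tri_veer \<tau> (tri_ed \<tau> T' (\<sigma> ` {1,3}))
    then \<sigma> ` {0,1} = bot_edge \<and> face_edges (\<sigma> 2) - {bot_edge} = {\<sigma> ` {0,3}, \<sigma> ` {1,3}}
    else \<sigma> ` {0,3} = bot_edge \<and> face_edges (\<sigma> 2) - {bot_edge} = {\<sigma> ` {0,1}, \<sigma> ` {1,3}}"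
    using veering_gluing[OF V top2, of T, folded \<sigma>_def]
    by (intro bot_edge_above_top_face rhombus)
  then show ?thesis
    unfolding veer_glued[OF edges_of_face_2(3)] top_edge_def .
qed

lemma tetrahedron_configuration:
  fixes T
  assumes "veering_triangulation \<tau>"
  defines "\<sigma> \<equiv> tri_gl \<tau> T 2"
  obtains k w u s where "k \<in> bot_faces" "face_edges k - {bot_edge} = {w, s}"
    and "{top_edge} \<union> opp_sides \<tau> T = {top_edge, u, s}"
    and "\<sigma> ` w = bot_edge" "face_edges (\<sigma> 2) - {bot_edge} = {\<sigma> ` u, \<sigma> ` top_edge}"
    and "w \<in> face_edges 2" "u \<in> face_edges 2"
    and "distinct [top_edge, u, s]" "w \<noteq> s" "u \<noteq> top_edge"
proof (cases "tri_veer \<tau> (tri_ed \<tau> T top_edge)")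
  case True
  then have "{top_edge} \<union> opp_sides \<tau> T = {top_edge, {0,3}, {1,2}}"
    by (auto simp: opp_sides_def neg_sides_def)
  moreover have "\<sigma> ` {0,1} = bot_edge" "face_edges (\<sigma> 2) - {bot_edge} = {\<sigma> ` {0,3}, \<sigma> ` top_edge}"
    using veering_bot_edge_above_top_face[OF assms(1), of T, folded \<sigma>_def] True by simp_all
  ultimately show ?thesis
    using side_edges_of_bot_face(2) edges_of_face_2(1,2)
    by (intro that[of 3 "{0,1}" "{1,2}" "{0,3}"]) (simp_all add: bot_faces_def top_edge_def doubleton_eq_iff)
next
  case False
  then have "{top_edge} \<union> opp_sides \<tau> T = {top_edge, {0,1}, {2,3}}"
    by (auto simp: opp_sides_def pos_sides_def)
  moreover have "\<sigma> ` {0,3} = bot_edge" "face_edges (\<sigma> 2) - {bot_edge} = {\<sigma> ` {0,1}, \<sigma> ` top_edge}"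
    using veering_bot_edge_above_top_face[OF assms(1), of T, folded \<sigma>_def] False by simp_all
  ultimately show ?thesis
    using side_edges_of_bot_face(1) edges_of_face_2(1,2)
    by (intro that[of 1 "{0,3}" "{2,3}" "{0,1}"]) (simp_all add: bot_faces_def top_edge_def doubleton_eq_iff)
qed

lemma Lmat_column_in_col_module:
  assumes V: "veering_triangulation \<tau>" and EL: "edge_lifts \<tau> \<phi> p"
  shows "(\<lambda>d. Lmat \<tau> p d e) \<in> col_module (LFmat \<tau> p)"
proof -
  define T where "T = tet_above \<tau> e"
  define \<sigma> where "\<sigma> = tri_gl \<tau> T 2"
  have top2: "(2::nat) \<in> top_faces"
    by (simp add: top_faces_def)
  note glue = veering_gluing[OF V top2, of T, folded \<sigma>_def]
  obtain k w u s where k: "k \<in> bot_faces" and sides: "face_edges k - {bot_edge} = {w, s}"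
    and tet: "{top_edge} \<union> opp_sides \<tau> T = {top_edge, u, s}"
    and glued: "\<sigma> ` w = bot_edge" "face_edges (\<sigma> 2) - {bot_edge} = {\<sigma> ` u, \<sigma> ` top_edge}"
    and in_face: "w \<in> face_edges 2" "u \<in> face_edges 2"
    and distinct: "distinct [top_edge, u, s]" "w \<noteq> s" "u \<noteq> top_edge"
    by (rule tetrahedron_configuration[OF V, of T, folded \<sigma>_def])
  have top_face: "LFmat \<tau> p d (tri_fc \<tau> T 2) = local_relation \<tau> p T w {u, top_edge} d" for d
    using local_relation_glued[OF V EL top2 in_face(1), of "{u, top_edge}" T d] in_face(2) edges_of_face_2(3)[folded top_edge_def]
    by (simp add: LFmat_def glue(4) face_above_tri_fc[OF V glue(3)] rel_vec_eq_local_relation glued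
        flip: \<sigma>_def)
  have column: "Lmat \<tau> p d e
      = LFmat \<tau> p d (tri_fc \<tau> T k) * 1 + LFmat \<tau> p d (tri_fc \<tau> T 2) * mon (p T w - p T bot_edge)" for d
  proof -
    have "Lmat \<tau> p d e = local_relation \<tau> p T bot_edge {top_edge, u, s} d"
      using tet by (simp add: Lmat_def rel_vec_eq_local_relation flip: T_def)
    also have "\<dots> = local_relation \<tau> p T bot_edge {w, s} d
        + mon (p T w - p T bot_edge) * local_relation \<tau> p T w {u, top_edge} d"
      using distinct by (rule local_relation_split)
    also have "local_relation \<tau> p T bot_edge {w, s} d = LFmat \<tau> p d (tri_fc \<tau> T k)"
      by (simp add: LFmat_def face_above_tri_fc[OF V k] rel_vec_eq_local_relation sides)
    finally show ?thesis
      by (simp add: top_face mult.commute)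
  qed
  show ?thesis
    unfolding column by (rule col_module_lincomb)
qed

theorem mainTheorem3:
  fixes \<tau> :: "('t::finite, 'f::finite, 'e::finite) tri"
    and \<phi> :: "'f \<Rightarrow> 'g::ab_group_add"
    and p :: "'t \<Rightarrow> nat set \<Rightarrow> 'g"
    and \<Theta> :: "'g zgroupring"
  assumes "veering_triangulation \<tau>"
    and "univ_free_abelian_cover \<tau> \<phi>"
    and "edge_lifts \<tau> \<phi> p"
    and "is_gcd_of \<Theta> (face_minors \<tau> p)"
  shows "col_module (Lmat \<tau> p) \<subseteq> col_module (LFmat \<tau> p) \<and> \<Theta> dvd veering_poly \<tau> p"
proof -
  have columns: "\<And>e. (\<lambda>d. Lmat \<tau> p d e) \<in> col_module (LFmat \<tau> p)"
    using Lmat_column_in_col_module[OF assms(1,3)] .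
  have minors: "\<And>\<sigma>. inj \<sigma> \<Longrightarrow> \<Theta> dvd det (\<chi> d e. LFmat \<tau> p d (\<sigma> e))"
    using assms(4) unfolding is_gcd_of_def face_minors_def by blast
  have "col_module (Lmat \<tau> p) \<subseteq> col_module (LFmat \<tau> p)"
    using columns by (rule col_module_subset)
  moreover have "\<Theta> dvd veering_poly \<tau> p"
    unfolding veering_poly_def using columns minors by (rule dvd_det_if_columns_in_col_module)
  ultimately show ?thesis ..
qed

end
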